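(* Let $d \ge 1$, let $r^{(1)},\dots,r^{(\rho)} \in (0,1)^d$ be pairwise incomparable points such that for each $j$ the values $r^{(i)}_j$ are distinct, let $S$ be their record-setting region and $G$ its set of generators. Let $r \in S \cap (0,1)^d$ be such that, for each $j \in [d]$, $r_j \ne r^{(i)}_j$ for all $i \in [\rho]$. Let $S' := S \setminus O^-_r = \{x \in S : x \not\prec r\}$. Define $\Sigma := \{g \in G : g \not\prec r\}$, $N := G \setminus \Sigma = \{g \in G: g \prec r\}$, $\widehat N := \{ y \vee (r_k e^{(k)}) : y \in N, k \in [d]\}$, and let $N'$ be the set of minimal elements of $\widehat N$ with respect to $\le$. Then $\Sigma \cap N' = \emptyset$ and the set of minimal elements of $S'$ with respect to $\le$ is exactly $\Sigma \cup N'$.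
   Context: For $x,y \in \mathbb{R}^d$, $x \prec y$ means $x_j < y_j$ for all $j$, and $x \le y$ means $x_j \le y_j$ for all $j$. The record-setting region of points $r^{(1)},\dots,r^{(\rho)}$ is $S := \{x \in [0,1)^d : x \not\prec r^{(i)} \text{ for all } i\}$; its generators are its minimal elements with respect to $\le$. $O^-_r := \{y \in [0,1)^d : y \prec r\}$. $x \vee y$ denotes the coordinatewise maximum, and $e^{(k)}$ is the $k$-th standard basis vector of $\mathbb{R}^d$. *)

theory Defs
  imports "HOL-Analysis.Analysis"
begin

text \<open>Points of the unit cube are vectors in real^'d (d = CARD('d) \<ge> 1).
  The order x \<le> y on real^'d is the library's componentwise order.\<close>

definition prec :: "real^'d \<Rightarrow> real^'d \<Rightarrow> bool" (infix "\<prec>" 50) where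
  "x \<prec> y \<longleftrightarrow> (\<forall>j. x$j < y$j)"

definition halfopen_cube :: "(real^'d) set" where
  "halfopen_cube = {x. \<forall>j. 0 \<le> x$j \<and> x$j < 1}"

definition open_cube :: "(real^'d) set" where
  "open_cube = {x. \<forall>j. 0 < x$j \<and> x$j < 1}"

definition record_region :: "(nat \<Rightarrow> real^'d) \<Rightarrow> nat \<Rightarrow> (real^'d) set" where
  "record_region R rho = {x \<in> halfopen_cube. \<forall>i\<in>{1..rho}. \<not> (x \<prec> R i)}"

definition minimal_elems :: "(real^'d) set \<Rightarrow> (real^'d) set" where
  "minimal_elems A = {x \<in> A. \<forall>y\<in>A. y \<le> x \<longrightarrow> y = x}"

definition generators :: "(nat \<Rightarrow> real^'d) \<Rightarrow> nat \<Rightarrow> (real^'d) set" where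
  "generators R rho = minimal_elems (record_region R rho)"

definition O_minus :: "real^'d \<Rightarrow> (real^'d) set" where
  "O_minus r = {y \<in> halfopen_cube. y \<prec> r}"

definition vjoin :: "real^'d \<Rightarrow> real^'d \<Rightarrow> real^'d" where
  "vjoin x y = (\<chi> j. max (x$j) (y$j))"

definition coord_vec :: "real^'d \<Rightarrow> 'd \<Rightarrow> real^'d" where
  "coord_vec r k = (\<chi> j. if j = k then r$k else 0)"

end

theory Submission
  imports Defs
begin

text \<open>Rounding every coordinate of a point x of the record-setting region S down to the grid
  formed by 0 and the coordinates of the records keeps it in S, so the generators are grid
  points and every point of S dominates one. A generator g that is not below r has some
  coordinate g_j \<ge> r_j; since g_j is a grid value and r avoids the grid, g cannot lie below
  a lifted point y \<or> r_k e^(k) with y \<prec> r. Hence S' = S - O^-_r is covered from below by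
  \<Sigma> together with the lifted points, no element of \<Sigma> lies below a lifted point, and the
  minimal elements of S' are \<Sigma> together with the minimal lifted points.\<close>

lemma minimal_elems_of_cover:
  assumes A_min: "A \<subseteq> minimal_elems T" and B_sub: "B \<subseteq> T"
    and cover: "\<And>x. x \<in> T \<Longrightarrow> \<exists>y \<in> A \<union> B. y \<le> x"
    and A_not_below_B: "\<And>a b. a \<in> A \<Longrightarrow> b \<in> B \<Longrightarrow> \<not> a \<le> b"
  shows "A \<inter> minimal_elems B = {}" and "minimal_elems T = A \<union> minimal_elems B"
proof -
  show "A \<inter> minimal_elems B = {}"
    using A_not_below_B by (auto simp: minimal_elems_def)
  have "minimal_elems B \<subseteq> minimal_elems T"
  proof
    fix z assume z: "z \<in> minimal_elems B"
    have "w = z" if "w \<in> T" "w \<le> z" for w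
    proof -
      obtain y where y: "y \<in> A \<union> B" "y \<le> w" using cover \<open>w \<in> T\<close> by blast
      have "y \<le> z" using y(2) \<open>w \<le> z\<close> by (rule order_trans)
      hence "y \<in> B" "y = z" using y(1) z A_not_below_B by (auto simp: minimal_elems_def)
      thus "w = z" using y(2) \<open>w \<le> z\<close> by simp
    qed
    thus "z \<in> minimal_elems T" using z B_sub by (auto simp: minimal_elems_def)
  qed
  moreover have "minimal_elems T \<subseteq> A \<union> minimal_elems B"
  proof
    fix x assume x: "x \<in> minimal_elems T"
    then obtain y where y: "y \<in> A \<union> B" "y \<le> x" using cover by (auto simp: minimal_elems_def)
    hence "y = x" using x A_min B_sub by (auto simp: minimal_elems_def)
    thus "x \<in> A \<union> minimal_elems B" using x y B_sub by (auto simp: minimal_elems_def)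
  qed
  ultimately show "minimal_elems T = A \<union> minimal_elems B" using A_min by blast
qed

lemma record_region_upward_closed:
  assumes "x \<in> record_region R rho" "y \<in> halfopen_cube" "x \<le> y"
  shows "y \<in> record_region R rho"
  using assms unfolding record_region_def prec_def less_eq_vec_def
  by (fastforce intro: le_less_trans)

lemma generator_in_record_region: "g \<in> generators R rho \<Longrightarrow> g \<in> record_region R rho"
  by (simp add: generators_def minimal_elems_def)

lemma record_region_subset_cube: "record_region R rho \<subseteq> halfopen_cube"
  by (auto simp: record_region_def)

definition grid :: "(nat \<Rightarrow> real^'d) \<Rightarrow> nat \<Rightarrow> 'd \<Rightarrow> real set" where
  "grid R rho j = insert 0 ((\<lambda>i. R i $ j) ` {1..rho})"

definition grid_floor :: "(nat \<Rightarrow> real^'d) \<Rightarrow> nat \<Rightarrow> real^'d \<Rightarrow> real^'d" where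
  "grid_floor R rho x = (\<chi> j. Max {c \<in> grid R rho j. c \<le> x$j})"

lemma finite_grid: "finite (grid R rho j)"
  by (simp add: grid_def)

lemma grid_floor_greatest:
  assumes "0 \<le> x$j"
  shows "grid_floor R rho x $ j \<in> grid R rho j" "grid_floor R rho x $ j \<le> x$j"
    and "\<And>c. c \<in> grid R rho j \<Longrightarrow> c \<le> x$j \<Longrightarrow> c \<le> grid_floor R rho x $ j"
proof -
  have fin: "finite {c \<in> grid R rho j. c \<le> x$j}" by (simp add: finite_grid)
  have "0 \<in> {c \<in> grid R rho j. c \<le> x$j}" using assms by (simp add: grid_def)
  hence "Max {c \<in> grid R rho j. c \<le> x$j} \<in> {c \<in> grid R rho j. c \<le> x$j}"
    using fin by (intro Max_in) auto
  thus "grid_floor R rho x $ j \<in> grid R rho j" "grid_floor R rho x $ j \<le> x$j"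
    by (simp_all add: grid_floor_def)
  show "c \<le> grid_floor R rho x $ j" if "c \<in> grid R rho j" "c \<le> x$j" for c
    using that fin by (simp add: grid_floor_def)
qed

text \<open>The coordinates of the records lie in the grid, so rounding down cannot carry a
  point into the open lower orthant of a record.\<close>
lemma grid_floor_in_record_region:
  assumes x: "x \<in> record_region R rho"
  shows "grid_floor R rho x \<in> record_region R rho" "grid_floor R rho x \<le> x"
    and "grid_floor R rho x $ j \<in> grid R rho j"
proof -
  have cube: "0 \<le> x$j" "x$j < 1" for j using x by (auto simp: record_region_def halfopen_cube_def)
  note floor = grid_floor_greatest[OF cube(1)]
  show "grid_floor R rho x $ j \<in> grid R rho j" by (rule floor(1))
  show le: "grid_floor R rho x \<le> x" using floor(2) by (simp add: less_eq_vec_def)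
  have "0 \<le> grid_floor R rho x $ j" for j using floor(3)[where c=0] cube by (simp add: grid_def)
  moreover have "grid_floor R rho x $ j < 1" for j using floor(2) cube(2) order_le_less_trans by blast
  moreover have "\<not> grid_floor R rho x \<prec> R i" if i: "i \<in> {1..rho}" for i
  proof
    assume below: "grid_floor R rho x \<prec> R i"
    have "\<not> x \<prec> R i" using x i by (simp add: record_region_def)
    then obtain j where "R i $ j \<le> x $ j" by (auto simp: prec_def not_less)
    hence "R i $ j \<le> grid_floor R rho x $ j" using i floor(3) by (simp add: grid_def)
    thus False using below by (simp add: prec_def not_less[symmetric])
  qed
  ultimately show "grid_floor R rho x \<in> record_region R rho"
    by (simp add: record_region_def halfopen_cube_def)
qed

lemma generator_in_grid:
  assumes "g \<in> generators R rho"
  shows "g $ j \<in> grid R rho j"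
proof -
  have gS: "g \<in> record_region R rho" using assms by (rule generator_in_record_region)
  have "grid_floor R rho g = g"
    using assms grid_floor_in_record_region[OF gS] by (simp add: generators_def minimal_elems_def)
  thus ?thesis using grid_floor_in_record_region(3)[OF gS, of j] by simp
qed

lemma finite_vectors_with_coords_in:
  fixes C :: "'d::finite \<Rightarrow> real set"
  assumes "\<And>j. finite (C j)"
  shows "finite {y::real^'d. \<forall>j. y$j \<in> C j}"
proof -
  have "y \<in> (\<lambda>f. \<chi> j. f j) ` PiE UNIV C" if "\<forall>j. y$j \<in> C j" for y :: "real^'d"
    using that by (intro image_eqI[where x="\<lambda>j. y$j"]) auto
  hence "{y::real^'d. \<forall>j. y$j \<in> C j} \<subseteq> (\<lambda>f. \<chi> j. f j) ` PiE UNIV C" by blast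
  moreover have "finite (PiE UNIV C)" using assms by (simp add: finite_PiE)
  ultimately show ?thesis by (meson finite_imageI finite_subset)
qed

text \<open>Minimality among the finitely many grid points of S below x already implies minimality
  in S, because any smaller point of S can be rounded down to the grid.\<close>
lemma exists_generator_below:
  assumes x: "x \<in> record_region R rho"
  shows "\<exists>g \<in> generators R rho. g \<le> x"
proof -
  define F where "F = {y \<in> record_region R rho. y \<le> x \<and> (\<forall>j. y$j \<in> grid R rho j)}"
  have "finite F"
    by (rule finite_subset[OF _ finite_vectors_with_coords_in[of "grid R rho"]])
      (auto simp: F_def finite_grid)
  moreover have "grid_floor R rho x \<in> F"
    using grid_floor_in_record_region[OF x] by (simp add: F_def)
  ultimately obtain g where g: "g \<in> F" and g_min: "\<And>y. y \<in> F \<Longrightarrow> y \<le> g \<Longrightarrow> g = y"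
    using finite_has_minimal2 by metis
  have "w = g" if w: "w \<in> record_region R rho" "w \<le> g" for w
  proof -
    note w_floor = grid_floor_in_record_region[OF w(1)]
    have "grid_floor R rho w \<le> g" using w_floor(2) w(2) by (rule order_trans)
    moreover have "grid_floor R rho w \<in> F"
      using w_floor calculation g by (auto simp: F_def intro: order_trans)
    ultimately have "grid_floor R rho w = g" using g_min by metis
    thus "w = g" using w_floor(2) w(2) by simp
  qed
  thus ?thesis using g by (auto simp: F_def generators_def minimal_elems_def)
qed

lemma vjoin_coord_vec_nth:
  "vjoin y (coord_vec r k) $ j = (if j = k then max (y$j) (r$k) else max (y$j) 0)"
  by (simp add: vjoin_def coord_vec_def)

lemma generator_not_below_lift:
  fixes g y r :: "real^'d"
  assumes g: "g \<in> generators R rho" "\<not> g \<prec> r"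
    and y: "y \<in> halfopen_cube" "y \<prec> r"
    and r: "r \<in> open_cube" "\<forall>j. \<forall>i\<in>{1..rho}. r $ j \<noteq> R i $ j"
  shows "\<not> g \<le> vjoin y (coord_vec r k)"
proof
  assume le: "g \<le> vjoin y (coord_vec r k)"
  obtain j where j: "r$j \<le> g$j" using g(2) by (auto simp: prec_def not_less)
  have "0 \<le> y$j" "y$j < r$j" "0 < r$j"
    using y r(1) by (auto simp: halfopen_cube_def prec_def open_cube_def)
  moreover have "g$j \<le> vjoin y (coord_vec r k) $ j" using le by (simp add: less_eq_vec_def)
  ultimately have "g$j = r$j" "r$j \<noteq> 0"
    using j by (auto simp: vjoin_coord_vec_nth split: if_splits)
  thus False using generator_in_grid[OF g(1), of j] r(2) by (auto simp: grid_def)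
qed

lemma lift_in_record_region_outside:
  assumes y: "y \<in> record_region R rho" and r: "r \<in> open_cube"
  shows "vjoin y (coord_vec r k) \<in> record_region R rho - O_minus r"
proof -
  have "y \<in> halfopen_cube" using y record_region_subset_cube by blast
  hence "vjoin y (coord_vec r k) \<in> halfopen_cube"
    using r by (auto simp: halfopen_cube_def open_cube_def vjoin_coord_vec_nth le_max_iff_disj)
  moreover have "y \<le> vjoin y (coord_vec r k)"
    by (simp add: less_eq_vec_def vjoin_coord_vec_nth)
  moreover have "\<not> vjoin y (coord_vec r k) \<prec> r"
    by (auto simp: prec_def vjoin_coord_vec_nth)
  ultimately show ?thesis
    using record_region_upward_closed[OF y] by (auto simp: O_minus_def)
qed

lemma lift_below_outside_point:
  fixes x y r :: "real^'d"
  assumes x: "x \<in> halfopen_cube" "\<not> x \<prec> r" and "y \<le> x"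
  obtains k where "vjoin y (coord_vec r k) \<le> x"
proof -
  obtain k where "r$k \<le> x$k" using x(2) by (auto simp: prec_def not_less)
  thus ?thesis
    using that x(1) \<open>y \<le> x\<close> by (auto simp: less_eq_vec_def vjoin_coord_vec_nth halfopen_cube_def)
qed

text \<open>Only r \<in> S \<inter> (0,1)^d and the genericity of r enter the proof.\<close>
theorem mainTheorem6:
  fixes R :: "nat \<Rightarrow> real^'d" and rho :: nat and r :: "real^'d"
  assumes in_cube: "\<forall>i\<in>{1..rho}. R i \<in> open_cube"
    and incomparable: "\<forall>i\<in>{1..rho}. \<forall>i'\<in>{1..rho}. i \<noteq> i' \<longrightarrow> \<not> (R i \<le> R i')"
    and distinct_coords: "\<forall>j. \<forall>i\<in>{1..rho}. \<forall>i'\<in>{1..rho}. i \<noteq> i' \<longrightarrow> R i $ j \<noteq> R i' $ j"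
    and r_in: "r \<in> record_region R rho \<inter> open_cube"
    and r_generic: "\<forall>j. \<forall>i\<in>{1..rho}. r $ j \<noteq> R i $ j"
  defines "S' \<equiv> record_region R rho - O_minus r"
    and "\<Sigma> \<equiv> {g \<in> generators R rho. \<not> (g \<prec> r)}"
    and "N \<equiv> {g \<in> generators R rho. g \<prec> r}"
  defines "Nhat \<equiv> {vjoin y (coord_vec r k) | y k. y \<in> N}"
  defines "N' \<equiv> minimal_elems Nhat"
  shows "\<Sigma> \<inter> N' = {} \<and> minimal_elems S' = \<Sigma> \<union> N'"
proof -
  have r: "r \<in> open_cube" using r_in by simp
  have S'_iff: "x \<in> S' \<longleftrightarrow> x \<in> record_region R rho \<and> \<not> x \<prec> r" for x
    using record_region_subset_cube by (auto simp: S'_def O_minus_def)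
  have N_cube: "y \<in> halfopen_cube" if "y \<in> N" for y
    using that record_region_subset_cube generator_in_record_region by (fastforce simp: N_def)
  have "\<Sigma> \<subseteq> minimal_elems S'"
    using S'_iff by (auto simp: \<Sigma>_def generators_def minimal_elems_def)
  moreover have "Nhat \<subseteq> S'"
    using lift_in_record_region_outside[OF generator_in_record_region r]
    by (auto simp: Nhat_def N_def S'_def)
  moreover have "\<exists>y \<in> \<Sigma> \<union> Nhat. y \<le> x" if "x \<in> S'" for x
  proof -
    obtain g where g: "g \<in> generators R rho" "g \<le> x"
      using exists_generator_below S'_iff \<open>x \<in> S'\<close> by blast
    show ?thesis
    proof (cases "g \<prec> r")
      case True
      obtain k where "vjoin g (coord_vec r k) \<le> x"
        using lift_below_outside_point[OF _ _ g(2)] S'_iff \<open>x \<in> S'\<close> record_region_subset_cube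
        by blast
      thus ?thesis using g True by (auto simp: Nhat_def N_def)
    qed (use g in \<open>auto simp: \<Sigma>_def\<close>)
  qed
  moreover have "\<not> g \<le> z" if "g \<in> \<Sigma>" "z \<in> Nhat" for g z
    using that generator_not_below_lift[OF _ _ N_cube _ r r_generic]
    by (auto simp: \<Sigma>_def Nhat_def N_def)
  ultimately show ?thesis
    using minimal_elems_of_cover[of \<Sigma> S' Nhat] unfolding N'_def by blast
qed

end
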